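(* Let $\mathcal{E}'$ be any function mapping a pair consisting of an $\mathcal{ALC}$-formula and an interpretation to an $\mathcal{ALC}$-formula. Then $\mathcal{E}'(\varphi,M)\equiv\mathcal{E}(\varphi,M)$ for every $\mathcal{ALC}$-formula $\varphi$ and every interpretation $M$ (with $\mathcal{E}$ the finite base model expansion defined in the context) if and only if $\mathcal{E}'$ satisfies, for every $\varphi$ and $M$: (success) $M\in\mathrm{Mod}(\mathcal{E}'(\varphi,M))$; (persistence) $\mathrm{Mod}(\varphi)\subseteq\mathrm{Mod}(\mathcal{E}'(\varphi,M))$; (atomic temperance) for every set $\mathbb{M}'$ of interpretations, if $\mathrm{Mod}(\varphi)\cup[M]_\varphi\subseteq\mathbb{M}'\subsetneq\mathrm{Mod}(\mathcal{E}'(\varphi,M))\cup\{M\}$, then $\mathbb{M}'$ is not finitely representable in $\mathcal{ALC}$-formula; (atomic extensionality) for every interpretation $M'$, if $M'\equiv_\varphi M$ then $\mathrm{Mod}(\mathcal{E}'(\varphi,M))=\mathrm{Mod}(\mathcal{E}'(\varphi,M'))$.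
   Context: Syntax: $N_C,N_R,N_I$ are pairwise disjoint countably infinite sets of concept, role and individual names. $\mathcal{ALC}$ concepts: $C::=A\mid \neg C\mid (C\sqcap C)\mid \exists r.C$; $\top,\sqcup$ usual abbreviations. $\mathcal{ALC}$-formulae: $\phi::=\alpha\mid\neg\phi\mid(\phi\wedge\phi)$ with atomic $\alpha::=C(a)\mid r(a,b)\mid(C=\top)$; $\vee$ is the usual abbreviation; $\neg\neg\psi$ is identified with $\psi$. A literal is an atomic formula or its negation. Interpretations $I=(\Delta^I,\cdot^I)$ (countable nonempty domain, interpreting concept, role and individual names) with the standard semantics; $I\models C(a)$ iff $a^I\in C^I$, $I\models r(a,b)$ iff $(a^I,b^I)\in r^I$, $I\models(C=\top)$ iff $C^I=\Delta^I$, $\neg,\wedge$ classical. $\mathrm{Mod}(\varphi)$ is the set of interpretations satisfying $\varphi$; $\varphi\equiv\psi$ iff $\mathrm{Mod}(\varphi)=\mathrm{Mod}(\psi)$. A set of interpretations is finitely representable in $\mathcal{ALC}$-formula if it equals $\mathrm{Mod}$ of a finite set of $\mathcal{ALC}$-formulae. $\mathrm{Sub}(\alpha)=\mathrm{Sub}(\neg\alpha)=\{\alpha,\neg\alpha\}$ for atomic $\alpha$; $\mathrm{Sub}(\psi\wedge\psi')=\mathrm{Sub}(\neg(\psi\wedge\psi'))=\{\psi\wedge\psi',\neg(\psi\wedge\psi')\}\cup\mathrm{Sub}(\psi)\cup\mathrm{Sub}(\psi')$. $\mathrm{con}(\varphi)$ is the smallest concept set containing $C$ whenever $(C=\top)$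 or $C(a)$ is in $\mathrm{Sub}(\varphi)$, closed under taking conjuncts of $C\sqcap D$, under $\exists r.C\mapsto C$, and under single negation. For an interpretation $I$, $\mathrm{qm}(\varphi,I)=(T,o,f)$ where $T=\{c(x)\mid x\in\Delta^I\}$, $c(x)=\{C\in\mathrm{con}(\varphi)\mid x\in C^I\}$, $o(a)=c(a^I)$ for individuals $a$ of $\varphi$, and $f=\{\psi\in\mathrm{Sub}(\varphi)\mid I\models\psi\}$; $\mathrm{lit}(f)$ is the set of literals in $f$. The finite base model expansion is $\mathcal{E}(\varphi,M)=\varphi$ if $M\models\varphi$, and $\mathcal{E}(\varphi,M)=\varphi\vee\bigwedge\mathrm{lit}(f)$ otherwise, where $\mathrm{qm}(\neg\varphi,M)=(T,o,f)$. $\mathcal{L}_{lit}(\varphi)$ is the set of Boolean combinations of atomic formulae occurring in $\varphi$; $M\equiv_\varphi M'$ iff $M$ and $M'$ satisfy the same formulae of $\mathcal{L}_{lit}(\varphi)$; $[M]_\varphi=\{M'\mid M'\equiv_\varphi M\}$. *)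

theory Defs
  imports Main
begin

text \<open>Concept, role and individual names: three disjoint countably infinite sets,
  each represented by nat (disjointness is by typing).\<close>

datatype concept =
    CName nat
  | CNeg concept
  | CAnd concept concept
  | CEx nat concept

datatype atom =
    CAssert concept nat        (* C(a) *)
  | RAssert nat nat nat        (* r(a,b) *)
  | TBox concept               (* C = top *)

datatype formula =
    FAtom atom
  | FNeg formula
  | FAnd formula formula

definition FOr :: "formula \<Rightarrow> formula \<Rightarrow> formula" where
  "FOr p q = FNeg (FAnd (FNeg p) (FNeg q))"

text \<open>Interpretations: countable nonempty domain, represented as a nonempty subset of nat.\<close>

record interp =
  dom :: "nat set"
  cI  :: "nat \<Rightarrow> nat set"
  rI  :: "nat \<Rightarrow> (nat \<times> nat) set"
  iI  :: "nat \<Rightarrow> nat"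

definition Interps :: "interp set" where
  "Interps = {I. dom I \<noteq> {} \<and> (\<forall>A. cI I A \<subseteq> dom I) \<and> (\<forall>r. rI I r \<subseteq> dom I \<times> dom I)
               \<and> (\<forall>a. iI I a \<in> dom I)}"

fun ext :: "interp \<Rightarrow> concept \<Rightarrow> nat set" where
  "ext I (CName A) = cI I A"
| "ext I (CNeg C) = dom I - ext I C"
| "ext I (CAnd C D) = ext I C \<inter> ext I D"
| "ext I (CEx r C) = {x \<in> dom I. \<exists>y. (x, y) \<in> rI I r \<and> y \<in> ext I C}"

fun sat_atom :: "interp \<Rightarrow> atom \<Rightarrow> bool" where
  "sat_atom I (CAssert C a) = (iI I a \<in> ext I C)"
| "sat_atom I (RAssert r a b) = ((iI I a, iI I b) \<in> rI I r)"
| "sat_atom I (TBox C) = (ext I C = dom I)"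

fun sat :: "interp \<Rightarrow> formula \<Rightarrow> bool" where
  "sat I (FAtom \<alpha>) = sat_atom I \<alpha>"
| "sat I (FNeg p) = (\<not> sat I p)"
| "sat I (FAnd p q) = (sat I p \<and> sat I q)"

definition Mod :: "formula \<Rightarrow> interp set" where
  "Mod p = {I \<in> Interps. sat I p}"

definition fequiv :: "formula \<Rightarrow> formula \<Rightarrow> bool" where
  "fequiv p q \<longleftrightarrow> Mod p = Mod q"

definition ModS :: "formula set \<Rightarrow> interp set" where
  "ModS S = {I \<in> Interps. \<forall>p\<in>S. sat I p}"

definition finrep :: "interp set \<Rightarrow> bool" where
  "finrep MM \<longleftrightarrow> (\<exists>S. finite S \<and> MM = ModS S)"

text \<open>Sub; the identification of double negation is reflected by Sub (FNeg p) = Sub p.\<close>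

fun Sub :: "formula \<Rightarrow> formula set" where
  "Sub (FAtom \<alpha>) = {FAtom \<alpha>, FNeg (FAtom \<alpha>)}"
| "Sub (FAnd p q) = {FAnd p q, FNeg (FAnd p q)} \<union> Sub p \<union> Sub q"
| "Sub (FNeg p) = Sub p"

fun cneg :: "concept \<Rightarrow> concept" where
  "cneg (CNeg C) = C"
| "cneg C = CNeg C"

inductive_set con :: "formula \<Rightarrow> concept set" for \<phi> :: formula where
  con_tbox: "FAtom (TBox C) \<in> Sub \<phi> \<Longrightarrow> C \<in> con \<phi>"
| con_assert: "FAtom (CAssert C a) \<in> Sub \<phi> \<Longrightarrow> C \<in> con \<phi>"
| con_and1: "CAnd C D \<in> con \<phi> \<Longrightarrow> C \<in> con \<phi>"
| con_and2: "CAnd C D \<in> con \<phi> \<Longrightarrow> D \<in> con \<phi>"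
| con_ex: "CEx r C \<in> con \<phi> \<Longrightarrow> C \<in> con \<phi>"
| con_neg: "C \<in> con \<phi> \<Longrightarrow> cneg C \<in> con \<phi>"

fun inds_atom :: "atom \<Rightarrow> nat set" where
  "inds_atom (CAssert C a) = {a}"
| "inds_atom (RAssert r a b) = {a, b}"
| "inds_atom (TBox C) = {}"

fun inds :: "formula \<Rightarrow> nat set" where
  "inds (FAtom \<alpha>) = inds_atom \<alpha>"
| "inds (FNeg p) = inds p"
| "inds (FAnd p q) = inds p \<union> inds q"

definition ctype :: "formula \<Rightarrow> interp \<Rightarrow> nat \<Rightarrow> concept set" where
  "ctype \<phi> I x = {C \<in> con \<phi>. x \<in> ext I C}"

definition qm :: "formula \<Rightarrow> interp \<Rightarrow> concept set set \<times> (nat \<Rightarrow> concept set option) \<times> formula set" where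
  "qm \<phi> I = ({ctype \<phi> I x | x. x \<in> dom I},
             (\<lambda>a. if a \<in> inds \<phi> then Some (ctype \<phi> I (iI I a)) else None),
             {\<psi> \<in> Sub \<phi>. sat I \<psi>})"

fun is_literal :: "formula \<Rightarrow> bool" where
  "is_literal (FAtom \<alpha>) = True"
| "is_literal (FNeg (FAtom \<alpha>)) = True"
| "is_literal _ = False"

definition lit :: "formula set \<Rightarrow> formula set" where
  "lit f = {\<psi> \<in> f. is_literal \<psi>}"

definition ftrue :: formula where
  "ftrue = FAtom (TBox (CNeg (CAnd (CName 0) (CNeg (CName 0)))))"

fun conj_list :: "formula list \<Rightarrow> formula" where
  "conj_list [] = ftrue"
| "conj_list [p] = p"
| "conj_list (p # ps) = FAnd p (conj_list ps)"

text \<open>Conjunction of a finite set of formulae (some enumeration; unique up to equivalence).\<close>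
definition BigAnd :: "formula set \<Rightarrow> formula" where
  "BigAnd S = conj_list (SOME xs. set xs = S)"

definition E :: "formula \<Rightarrow> interp \<Rightarrow> formula" where
  "E \<phi> M = (if sat M \<phi> then \<phi>
            else FOr \<phi> (BigAnd (lit (snd (snd (qm (FNeg \<phi>) M))))))"

fun atoms :: "formula \<Rightarrow> atom set" where
  "atoms (FAtom \<alpha>) = {\<alpha>}"
| "atoms (FNeg p) = atoms p"
| "atoms (FAnd p q) = atoms p \<union> atoms q"

inductive_set Llit :: "formula \<Rightarrow> formula set" for \<phi> :: formula where
  Llit_atom: "\<alpha> \<in> atoms \<phi> \<Longrightarrow> FAtom \<alpha> \<in> Llit \<phi>"
| Llit_neg: "p \<in> Llit \<phi> \<Longrightarrow> FNeg p \<in> Llit \<phi>"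
| Llit_and: "p \<in> Llit \<phi> \<Longrightarrow> q \<in> Llit \<phi> \<Longrightarrow> FAnd p q \<in> Llit \<phi>"

definition equiv_phi :: "formula \<Rightarrow> interp \<Rightarrow> interp \<Rightarrow> bool" where
  "equiv_phi \<phi> M M' \<longleftrightarrow> (\<forall>\<psi> \<in> Llit \<phi>. sat M \<psi> \<longleftrightarrow> sat M' \<psi>)"

definition eqclass :: "formula \<Rightarrow> interp \<Rightarrow> interp set" where
  "eqclass \<phi> M = {M' \<in> Interps. equiv_phi \<phi> M' M}"

end

theory Submission
  imports Defs
begin

(* The literals of Sub phi that hold in M pin M down exactly up to the equivalence of
   agreeing on the atoms of phi, so Mod (E phi M) = Mod phi \<union> [M]_phi.  This set satisfies
   success, persistence and atomic extensionality, and, being the model set of a single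
   formula, it is finitely representable.  Conversely, success and atomic extensionality
   force [M]_phi \<subseteq> Mod (E' phi M), persistence adds Mod phi, and atomic temperance then
   forbids any proper gap, since that gap would be bounded below by the representable set
   Mod phi \<union> [M]_phi. *)

lemma sat_cong_atoms:
  "(\<And>\<alpha>. \<alpha> \<in> atoms p \<Longrightarrow> sat_atom I \<alpha> = sat_atom J \<alpha>) \<Longrightarrow> sat I p = sat J p"
  by (induction p) auto

lemma atoms_Llit: "p \<in> Llit \<phi> \<Longrightarrow> atoms p \<subseteq> atoms \<phi>"
  by (induction rule: Llit.induct) auto

lemma equiv_phi_iff_atoms:
  "equiv_phi \<phi> I J \<longleftrightarrow> (\<forall>\<alpha>\<in>atoms \<phi>. sat_atom I \<alpha> = sat_atom J \<alpha>)"
  unfolding equiv_phi_def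
  by (metis Llit_atom atoms_Llit sat.simps(1) sat_cong_atoms subsetD)

lemma self_in_eqclass: "M \<in> Interps \<Longrightarrow> M \<in> eqclass \<phi> M"
  unfolding eqclass_def equiv_phi_def by simp

lemma eqclass_eq: "equiv_phi \<phi> M' M \<Longrightarrow> eqclass \<phi> M' = eqclass \<phi> M"
  unfolding eqclass_def equiv_phi_def by auto

lemma sat_conj_list: "sat I (conj_list ps) \<longleftrightarrow> (\<forall>p\<in>set ps. sat I p)"
  by (induction ps rule: conj_list.induct) (auto simp: ftrue_def)

lemma sat_BigAnd: "finite S \<Longrightarrow> sat I (BigAnd S) \<longleftrightarrow> (\<forall>p\<in>S. sat I p)"
  unfolding BigAnd_def
  by (metis (mono_tags) finite_list sat_conj_list someI_ex)

lemma finite_Sub: "finite (Sub p)"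
  by (induction p) auto

lemma literal_in_Sub_iff:
  "\<psi> \<in> Sub \<phi> \<and> is_literal \<psi> \<longleftrightarrow> (\<exists>\<alpha>\<in>atoms \<phi>. \<psi> = FAtom \<alpha> \<or> \<psi> = FNeg (FAtom \<alpha>))"
proof -
  have "FAtom \<alpha> \<in> Sub \<phi> \<longleftrightarrow> \<alpha> \<in> atoms \<phi>" "FNeg (FAtom \<alpha>) \<in> Sub \<phi> \<longleftrightarrow> \<alpha> \<in> atoms \<phi>" for \<alpha>
    by (induction \<phi>) auto
  then show ?thesis
    by (cases \<psi> rule: is_literal.cases) auto
qed

lemma lit_qm_FNeg: "lit (snd (snd (qm (FNeg \<phi>) M))) = {\<psi> \<in> Sub \<phi>. is_literal \<psi> \<and> sat M \<psi>}"
  unfolding lit_def qm_def by auto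

lemma sat_BigAnd_lit_qm_iff_equiv_phi:
  "sat I (BigAnd (lit (snd (snd (qm (FNeg \<phi>) M))))) \<longleftrightarrow> equiv_phi \<phi> I M"
proof -
  have "finite {\<psi> \<in> Sub \<phi>. is_literal \<psi> \<and> sat M \<psi>}"
    using finite_Sub by simp
  then have "sat I (BigAnd (lit (snd (snd (qm (FNeg \<phi>) M)))))
      \<longleftrightarrow> (\<forall>\<psi>. \<psi> \<in> Sub \<phi> \<and> is_literal \<psi> \<longrightarrow> sat M \<psi> \<longrightarrow> sat I \<psi>)"
    by (auto simp: lit_qm_FNeg sat_BigAnd)
  also have "\<dots> \<longleftrightarrow> (\<forall>\<alpha>\<in>atoms \<phi>. sat_atom I \<alpha> = sat_atom M \<alpha>)"
    unfolding literal_in_Sub_iff by auto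
  finally show ?thesis
    by (simp add: equiv_phi_iff_atoms)
qed

lemma Mod_E: "Mod (E \<phi> M) = Mod \<phi> \<union> eqclass \<phi> M"
proof (cases "sat M \<phi>")
  case True
  have "sat I \<phi>" if "equiv_phi \<phi> I M" for I
    using True sat_cong_atoms[of \<phi> I M] that by (simp add: equiv_phi_iff_atoms)
  then have "eqclass \<phi> M \<subseteq> Mod \<phi>"
    by (auto simp: eqclass_def Mod_def)
  with True show ?thesis
    by (auto simp: E_def)
next
  case False
  then show ?thesis
    by (auto simp: E_def FOr_def Mod_def eqclass_def sat_BigAnd_lit_qm_iff_equiv_phi)
qed

lemma finrep_Mod: "finrep (Mod p)"
  unfolding finrep_def ModS_def Mod_def by (intro exI[of _ "{p}"]) auto

lemma postulates_if_Mod_eq: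
  assumes M: "M \<in> Interps"
    and Mod_F: "\<And>N. N \<in> Interps \<Longrightarrow> Mod (F N) = Mod \<phi> \<union> eqclass \<phi> N"
  shows "M \<in> Mod (F M)"
    and "Mod \<phi> \<subseteq> Mod (F M)"
    and "\<forall>MM. Mod \<phi> \<union> eqclass \<phi> M \<subseteq> MM \<and> MM \<subset> Mod (F M) \<union> {M} \<longrightarrow> \<not> finrep MM"
    and "\<forall>M' \<in> Interps. equiv_phi \<phi> M' M \<longrightarrow> Mod (F M) = Mod (F M')"
  using self_in_eqclass[OF M, of \<phi>] eqclass_eq[of \<phi> _ M] by (auto simp: Mod_F M)

lemma Mod_eq_if_postulates:
  assumes M: "M \<in> Interps"
    and success: "\<And>N. N \<in> Interps \<Longrightarrow> N \<in> Mod (F N)"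
    and persistence: "Mod \<phi> \<subseteq> Mod (F M)"
    and temperance:
      "\<forall>MM. Mod \<phi> \<union> eqclass \<phi> M \<subseteq> MM \<and> MM \<subset> Mod (F M) \<union> {M} \<longrightarrow> \<not> finrep MM"
    and extensionality: "\<forall>M' \<in> Interps. equiv_phi \<phi> M' M \<longrightarrow> Mod (F M) = Mod (F M')"
  shows "Mod (F M) = Mod \<phi> \<union> eqclass \<phi> M"
proof -
  have "eqclass \<phi> M \<subseteq> Mod (F M)"
    using success extensionality by (auto simp: eqclass_def)
  with persistence success[OF M]
  have lower: "Mod \<phi> \<union> eqclass \<phi> M \<subseteq> Mod (F M) \<union> {M}"
    by blast
  have "finrep (Mod \<phi> \<union> eqclass \<phi> M)"
    using finrep_Mod[of "E \<phi> M"] by (simp add: Mod_E)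
  with temperance lower have "Mod \<phi> \<union> eqclass \<phi> M = Mod (F M) \<union> {M}"
    by blast
  with self_in_eqclass[OF M] show ?thesis
    using success[OF M] by blast
qed

theorem mainTheorem2:
  fixes E' :: "formula \<Rightarrow> interp \<Rightarrow> formula"
  shows "(\<forall>\<phi>. \<forall>M \<in> Interps. fequiv (E' \<phi> M) (E \<phi> M)) \<longleftrightarrow>
         (\<forall>\<phi>. \<forall>M \<in> Interps.
            M \<in> Mod (E' \<phi> M)
          \<and> Mod \<phi> \<subseteq> Mod (E' \<phi> M)
          \<and> (\<forall>MM. Mod \<phi> \<union> eqclass \<phi> M \<subseteq> MM \<and> MM \<subset> Mod (E' \<phi> M) \<union> {M} \<longrightarrow> \<not> finrep MM)
          \<and> (\<forall>M' \<in> Interps. equiv_phi \<phi> M' M \<longrightarrow> Mod (E' \<phi> M) = Mod (E' \<phi> M')))"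
  (is "?expansion \<longleftrightarrow> ?postulates")
proof
  assume ?expansion
  then have "Mod (E' \<phi> M) = Mod \<phi> \<union> eqclass \<phi> M" if "M \<in> Interps" for \<phi> M
    using that by (simp add: fequiv_def Mod_E)
  then show ?postulates
    using postulates_if_Mod_eq[of _ "E' _"] by (metis (no_types, lifting))
next
  assume ?postulates
  then show ?expansion
    using Mod_eq_if_postulates[of _ "E' _"] by (simp add: fequiv_def Mod_E)
qed

end
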